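(* Let $(X,d)$ be a complete metric space with finite metric dimension, let $\mathcal{D}=\bigcup_j\mathcal{D}^j$, $\mathcal{D}^j=\{Q^j_k\}$, be a dyadic family in $X$ with parameter $\delta\in(0,1)$ and centers $x^j_k$, and let $\mu$ be a Borel measure on $X$ that is positive and finite on $d$-balls. Fix $j$ and set $T_j=\sum_k\mu(Q^j_k)\delta_{x^j_k}$. Fix a constant $C>0$ and a symmetric matrix $(H^j_{ki})$ with positive entries, and let $S_j=\sum_{k,i}w^j_{ki}\delta_{(x^j_k,x^j_i)}$ where $w^j_{ki}=H^j_{ki}(\mu(Q^j_k)+\mu(Q^j_i))$ if $k\neq i$ and $d(x^j_k,x^j_i)<C\delta^j$, and $w^j_{ki}=0$ otherwise. Then (1) for $\Phi\in\mathscr{C}_c(X\times X)$, $$Kir_j\Phi(x^j_k)=\frac1{\mu(Q^j_k)}\sum_{\{i\neq k:d(x^j_i,x^j_k)<C\delta^j\}}\Phi(x^j_k,x^j_i)(\mu(Q^j_k)+\mu(Q^j_i))H^j_{ki};$$ (2) for $f$ continuous and bounded on $X$, $$\Delta_jf(x^j_k)=\sum_{\{i:d(x^j_i,x^j_k)<C\delta^j\}}(f(x^j_i)-f(x^j_k))\Big(1+\frac{\mu(Q^j_i)}{\mu(Q^j_k)}\Big)H^j_{ki}.$$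
   Context: $(X,d)$ has finite metric (Assouad) dimension: there is $N$ such that no ball of radius $r$ contains more than $N$ points of any $r/2$-disperse set (a set $D$ is $\varepsilon$-disperse if $d(x,y)\ge\varepsilon$ for distinct $x,y\in D$). A dyadic family is a countable family $\mathcal{D}=\bigcup_{j\in\mathbb{Z}}\mathcal{D}^j$ of Borel sets for which there are $0<\delta<1$, $0<a<b$, $M\in\mathbb{N}$ and points $\{x^j_k\}$ such that: each $\mathcal{D}^j=\{Q^j_k\}$ is a disjoint partition of $X$; $B_d(x^j_k,a\delta^j)\subseteq Q^j_k\subseteq B_d(x^j_k,b\delta^j)$; each $Q^j_k$ is the disjoint union of at most $M$ sets of $\mathcal{D}^{j+1}$. $\delta_p$ is the unit point mass. With $\mathscr{S}_1=\mathscr{C}_c(X)$, $\mathscr{S}_2=\mathscr{C}_c(X\times X)$, $Kir_j\Phi$ is a function on $\{x^j_k\}$ with $\int\varphi\,Kir_j\Phi\,dT_j=\iint\varphi(x)\Phi(x,y)\,dS_j(x,y)$ for all $\varphi\in\mathscr{S}_1$, and $\Delta_jf=Kir_j(f(y)-f(x))$ with the same identity. *)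

theory Defs
  imports "HOL-Analysis.Analysis"
begin

definition finite_metric_dimension :: "'a::metric_space set \<Rightarrow> bool" where
  "finite_metric_dimension X \<longleftrightarrow>
     (\<exists>N::nat. \<forall>x\<in>X. \<forall>r>0. \<forall>E\<subseteq>X.
        (\<forall>p\<in>E. \<forall>q\<in>E. p \<noteq> q \<longrightarrow> dist p q \<ge> r / 2) \<longrightarrow>
        finite (E \<inter> ball x r) \<and> card (E \<inter> ball x r) \<le> N)"

text \<open>Dyadic family: level j is the partition D j of the space; c j Q is the centre of Q.\<close>
definition dyadic_family ::
  "real \<Rightarrow> real \<Rightarrow> real \<Rightarrow> nat \<Rightarrow> (int \<Rightarrow> 'a::metric_space set set) \<Rightarrow> (int \<Rightarrow> 'a set \<Rightarrow> 'a) \<Rightarrow> bool" where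
  "dyadic_family \<delta> a b M D c \<longleftrightarrow>
     0 < \<delta> \<and> \<delta> < 1 \<and> 0 < a \<and> a < b \<and>
     (\<forall>j. countable (D j) \<and> disjoint (D j) \<and> \<Union>(D j) = UNIV) \<and>
     (\<forall>j. \<forall>Q\<in>D j. Q \<in> sets borel \<and>
          ball (c j Q) (a * \<delta> powi j) \<subseteq> Q \<and> Q \<subseteq> ball (c j Q) (b * \<delta> powi j)) \<and>
     (\<forall>j. \<forall>Q\<in>D j. \<exists>F\<subseteq>D (j + 1). finite F \<and> card F \<le> M \<and> Q = \<Union>F)"

definition Cc :: "('a::metric_space \<Rightarrow> real) \<Rightarrow> bool" where
  "Cc \<phi> \<longleftrightarrow> continuous_on UNIV \<phi> \<and> compact (closure {x. \<phi> x \<noteq> 0})"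

definition dyad_weight ::
  "(int \<Rightarrow> 'a::metric_space set \<Rightarrow> 'a) \<Rightarrow> 'a measure \<Rightarrow> ('a set \<Rightarrow> 'a set \<Rightarrow> real) \<Rightarrow> real \<Rightarrow> real \<Rightarrow> int
     \<Rightarrow> 'a set \<Rightarrow> 'a set \<Rightarrow> real" where
  "dyad_weight c mu H C \<delta> j Q Q' =
     (if Q \<noteq> Q' \<and> dist (c j Q) (c j Q') < C * \<delta> powi j
      then H Q Q' * (measure mu Q + measure mu Q') else 0)"

text \<open>T_j = sum_k mu(Q^j_k) delta_{x^j_k}, as a measure (on all subsets).\<close>
definition T_meas ::
  "(int \<Rightarrow> 'a::metric_space set set) \<Rightarrow> (int \<Rightarrow> 'a set \<Rightarrow> 'a) \<Rightarrow> 'a measure \<Rightarrow> int \<Rightarrow> 'a measure" where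
  "T_meas D c mu j = density (count_space UNIV)
     (\<lambda>x. \<Sum>Q\<in>{Q\<in>D j. c j Q = x}. ennreal (measure mu Q))"

text \<open>S_j = sum_{k,i} w^j_{ki} delta_{(x^j_k,x^j_i)}, as a measure (on all subsets).\<close>
definition S_meas ::
  "(int \<Rightarrow> 'a::metric_space set set) \<Rightarrow> (int \<Rightarrow> 'a set \<Rightarrow> 'a) \<Rightarrow> 'a measure
     \<Rightarrow> ('a set \<Rightarrow> 'a set \<Rightarrow> real) \<Rightarrow> real \<Rightarrow> real \<Rightarrow> int \<Rightarrow> ('a \<times> 'a) measure" where
  "S_meas D c mu H C \<delta> j = density (count_space UNIV)
     (\<lambda>(x, y). \<Sum>(Q, Q')\<in>{(Q, Q'). Q \<in> D j \<and> Q' \<in> D j \<and> c j Q = x \<and> c j Q' = y}.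
         ennreal (dyad_weight c mu H C \<delta> j Q Q'))"

text \<open>g satisfies the defining identity of Kir_j Phi:
  int phi g dT = iint phi(x) Phi(x,y) dS for all phi in C_c(X).\<close>
definition kir_identity ::
  "'a::metric_space measure \<Rightarrow> ('a \<times> 'a) measure \<Rightarrow> ('a \<times> 'a \<Rightarrow> real) \<Rightarrow> ('a \<Rightarrow> real) \<Rightarrow> bool" where
  "kir_identity T S \<Phi> g \<longleftrightarrow>
     (\<forall>\<phi>. Cc \<phi> \<longrightarrow> (\<integral>x. \<phi> x * g x \<partial>T) = (\<integral>z. \<phi> (fst z) * \<Phi> z \<partial>S))"

end

theory Submission
  imports Defs
begin

(* Centres of distinct level-j cells are at least a \<delta>^j apart, and closed balls are compact
   (finite metric dimension gives total boundedness, completeness does the rest), so a compactly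
   supported test function is nonzero at only finitely many centres.  On test functions T_j and
   S_j are therefore finite sums of point masses, and the defining identity of Kir_j \<Phi> = g reads
     \<Sum>_k \<phi>(x_k) (\<mu>(Q_k) g(x_k) - \<Sum>_i w_ki \<Phi>(x_k, x_i)) = 0.
   The displayed formula makes every bracket vanish; conversely a tent function equal to 1 at x_k
   and vanishing at all other centres isolates the k-th bracket.  Formula (2) is (1) for
   \<Phi>(x, y) = f(y) - f(x), the term i = k being zero. *)

definition disperse :: "real \<Rightarrow> 'a::metric_space set \<Rightarrow> bool" where
  "disperse e E \<longleftrightarrow> (\<forall>p\<in>E. \<forall>q\<in>E. p \<noteq> q \<longrightarrow> e \<le> dist p q)"

lemma finite_Int_compact_disperse:
  fixes E K :: "'a::metric_space set"
  assumes K: "compact K" and e: "0 < e" and E: "disperse e E"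
  shows "finite (E \<inter> K)"
proof (rule ccontr)
  assume "infinite (E \<inter> K)"
  then obtain x where "x islimpt (E \<inter> K)"
    using K unfolding compact_eq_Bolzano_Weierstrass by blast
  then have inf: "infinite (E \<inter> K \<inter> ball x (e / 2))"
    using e unfolding islimpt_eq_infinite_ball by simp
  then obtain p where p: "p \<in> E \<inter> K \<inter> ball x (e / 2)"
    by (metis finite.emptyI ex_in_conv)
  from inf have "infinite (E \<inter> K \<inter> ball x (e / 2) - {p})"
    by simp
  then obtain q where q: "q \<in> E \<inter> K \<inter> ball x (e / 2)" "q \<noteq> p"
    by (metis Diff_iff finite.emptyI ex_in_conv singletonI)
  have "dist p q \<le> dist x p + dist x q"
    by (rule dist_triangle3)
  with p q have "dist p q < e"
    by simp
  moreover have "e \<le> dist p q"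
    using E p q unfolding disperse_def by (metis IntD1)
  ultimately show False
    by simp
qed

lemma finite_cover_if_disperse_bounded:
  fixes S :: "'a::metric_space set"
  assumes e: "0 < e" and bounded: "\<And>E. E \<subseteq> S \<Longrightarrow> disperse e E \<Longrightarrow> finite E \<and> card E \<le> B"
  shows "\<exists>F. finite F \<and> S \<subseteq> (\<Union>p\<in>F. ball p e)"
proof -
  define \<E> where "\<E> = {E. E \<subseteq> S \<and> disperse e E}"
  have "card ` \<E> \<subseteq> {..B}"
    using bounded by (auto simp: \<E>_def)
  then have fin_cards: "finite (card ` \<E>)"
    using finite_subset by blast
  have "{} \<in> \<E>"
    by (simp add: \<E>_def disperse_def)
  then have "card ` \<E> \<noteq> {}"
    by blast
  then obtain F where F: "F \<in> \<E>" and F_max: "card F = Max (card ` \<E>)"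
    using Max_in[OF fin_cards] by (metis imageE)
  have F_fin: "finite F"
    using F bounded by (auto simp: \<E>_def)
  have "S \<subseteq> (\<Union>p\<in>F. ball p e)"
  proof
    fix y assume y: "y \<in> S"
    show "y \<in> (\<Union>p\<in>F. ball p e)"
    proof (rule ccontr)
      assume "y \<notin> (\<Union>p\<in>F. ball p e)"
      then have far: "\<forall>p\<in>F. e \<le> dist y p"
        by (auto simp: dist_commute not_less)
      then have "y \<notin> F"
        using e by force
      moreover have "insert y F \<in> \<E>"
        using F far y unfolding \<E>_def disperse_def by (auto simp: dist_commute)
      then have "card (insert y F) \<le> card F"
        using F_max fin_cards by auto
      ultimately show False
        using F_fin by simp
    qed
  qed
  with F_fin show ?thesis
    by blast
qed

lemma finite_metric_dimension_cover_half_radius: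
  assumes "finite_metric_dimension (UNIV :: 'a::metric_space set)"
  shows "\<exists>F. finite F \<and> ball (x::'a) r \<subseteq> (\<Union>p\<in>F. ball p (r / 2))"
proof (cases "0 < r")
  case False
  then show ?thesis
    by (intro exI[of _ "{}"]) simp
next
  case True
  obtain N where N: "\<forall>x. \<forall>r>0. \<forall>E::'a set.
      (\<forall>p\<in>E. \<forall>q\<in>E. p \<noteq> q \<longrightarrow> dist p q \<ge> r / 2) \<longrightarrow>
      finite (E \<inter> ball x r) \<and> card (E \<inter> ball x r) \<le> N"
    using assms unfolding finite_metric_dimension_def by auto
  have "finite E \<and> card E \<le> N" if "E \<subseteq> ball x r" "disperse (r / 2) E" for E
  proof -
    have "E \<inter> ball x r = E"
      using that(1) by blast
    then show ?thesis
      using N[rule_format, OF True, of E x] that(2) unfolding disperse_def by simp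
  qed
  then show ?thesis
    using True by (intro finite_cover_if_disperse_bounded) auto
qed

lemma finite_metric_dimension_cover_ball:
  assumes "finite_metric_dimension (UNIV :: 'a::metric_space set)"
  shows "\<exists>F. finite F \<and> ball (x::'a) r \<subseteq> (\<Union>p\<in>F. ball p (r / 2 ^ k))"
proof (induction k)
  case 0
  show ?case
    by (intro exI[of _ "{x}"]) simp
next
  case (Suc k)
  then obtain F where F: "finite F" "ball x r \<subseteq> (\<Union>p\<in>F. ball p (r / 2 ^ k))"
    by blast
  have "\<forall>p::'a. \<exists>G. finite G \<and> ball p (r / 2 ^ k) \<subseteq> (\<Union>q\<in>G. ball q (r / 2 ^ k / 2))"
    using finite_metric_dimension_cover_half_radius[OF assms] by blast
  then obtain G :: "'a \<Rightarrow> 'a set"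
    where G: "\<And>p. finite (G p) \<and> ball p (r / 2 ^ k) \<subseteq> (\<Union>q\<in>G p. ball q (r / 2 ^ k / 2))"
    by metis
  have "ball x r \<subseteq> (\<Union>q\<in>(\<Union>p\<in>F. G p). ball q (r / 2 ^ Suc k))"
    using F(2) G by (fastforce simp: mult.commute)
  with F(1) G show ?case
    by blast
qed

lemma finite_metric_dimension_compact_cball:
  assumes "finite_metric_dimension (UNIV :: 'a::complete_space set)"
  shows "compact (cball (x::'a) r)"
  unfolding compact_eq_totally_bounded
proof (intro conjI allI impI)
  show "complete (cball x r)"
    by (simp add: complete_eq_closed)
  fix e :: real assume "0 < e"
  then obtain k where k: "(r + 1) / e < 2 ^ k"
    using real_arch_pow[of 2] by auto
  obtain F where F: "finite F" "ball x (r + 1) \<subseteq> (\<Union>p\<in>F. ball p ((r + 1) / 2 ^ k))"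
    using finite_metric_dimension_cover_ball[OF assms, of x "r + 1" k] by blast
  have "(r + 1) / 2 ^ k < e"
    using k \<open>0 < e\<close> by (simp add: field_simps)
  have "cball x r \<subseteq> (\<Union>p\<in>F. ball p e)"
  proof
    fix y assume "y \<in> cball x r"
    then have "y \<in> ball x (r + 1)"
      by simp
    then obtain p where "p \<in> F" "dist p y < (r + 1) / 2 ^ k"
      using F(2) by auto
    with \<open>(r + 1) / 2 ^ k < e\<close> have "dist p y < e"
      by linarith
    with \<open>p \<in> F\<close> show "y \<in> (\<Union>p\<in>F. ball p e)"
      by auto
  qed
  with F(1) show "\<exists>F. finite F \<and> cball x r \<subseteq> (\<Union>p\<in>F. ball p e)"
    by blast
qed

lemma Cc_tent_function:
  fixes x :: "'a::metric_space"
  assumes e: "0 < e" and compact: "compact (cball x e)"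
  shows "Cc (\<lambda>y. max 0 (1 - dist y x / e))"
proof -
  let ?support = "{y. max 0 (1 - dist y x / e) \<noteq> 0}"
  have "?support \<subseteq> cball x e"
    using e by (auto simp: dist_commute field_simps max_def split: if_splits)
  then have "closure ?support \<subseteq> cball x e"
    by (simp add: closure_minimal)
  moreover have "compact (cball x e \<inter> closure ?support)"
    using compact by (intro compact_Int_closed) auto
  ultimately have "compact (closure ?support)"
    by (simp add: Int_absorb1)
  moreover have "continuous_on UNIV (\<lambda>y. max 0 (1 - dist y x / e))"
    using e by (intro continuous_intros) auto
  ultimately show ?thesis
    by (simp add: Cc_def)
qed

lemma integral_point_masses:
  fixes e :: "'i \<Rightarrow> 'b" and m :: "'i \<Rightarrow> real" and h :: "'b \<Rightarrow> real"
  assumes inj: "inj_on e I" and m_nonneg: "\<And>i. i \<in> I \<Longrightarrow> 0 \<le> m i"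
    and J: "finite J" "J \<subseteq> I" and outside_J: "\<And>i. i \<in> I - J \<Longrightarrow> m i * h (e i) = 0"
  shows "(\<integral>x. h x \<partial>density (count_space UNIV) (\<lambda>x. \<Sum>i\<in>{i\<in>I. e i = x}. ennreal (m i)))
    = (\<Sum>i\<in>J. m i * h (e i))"
proof -
  define w where "w x = (\<Sum>i\<in>{i\<in>I. e i = x}. m i)" for x
  have w_nonneg: "0 \<le> w x" for x
    unfolding w_def using m_nonneg by (intro sum_nonneg) auto
  have w_at: "w (e i) = m i" if "i \<in> I" for i
  proof -
    have "{i'\<in>I. e i' = e i} = {i}"
      using inj that by (auto dest: inj_onD)
    then show ?thesis
      by (simp add: w_def)
  qed
  have w_off: "w x = 0" if "x \<notin> e ` I" for x
  proof -
    have "{i\<in>I. e i = x} = {}"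
      using that by auto
    then show ?thesis
      unfolding w_def by (simp only: sum.empty)
  qed
  have support: "{x. w x * h x \<noteq> 0} \<subseteq> e ` J"
  proof
    fix x assume x: "x \<in> {x. w x * h x \<noteq> 0}"
    then obtain i where i: "i \<in> I" "x = e i"
      using w_off by fastforce
    with x w_at outside_J show "x \<in> e ` J"
      by (metis DiffI image_eqI mem_Collect_eq)
  qed
  have "(\<lambda>x. \<Sum>i\<in>{i\<in>I. e i = x}. ennreal (m i)) = (\<lambda>x. ennreal (w x))"
    using m_nonneg by (auto simp: w_def intro!: sum_ennreal)
  then have "(\<integral>x. h x \<partial>density (count_space UNIV) (\<lambda>x. \<Sum>i\<in>{i\<in>I. e i = x}. ennreal (m i)))
      = (\<integral>x. w x * h x \<partial>count_space UNIV)"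
    by (simp add: integral_density w_nonneg)
  also have "\<dots> = (\<Sum>x | w x * h x \<noteq> 0. w x * h x)"
    using finite_subset[OF support finite_imageI[OF J(1)]]
    by (simp add: lebesgue_integral_count_space_finite_support)
  also have "\<dots> = (\<Sum>x\<in>e ` J. w x * h x)"
    using support J(1) by (intro sum.mono_neutral_left) auto
  also have "\<dots> = (\<Sum>i\<in>J. w (e i) * h (e i))"
    using inj_on_subset[OF inj J(2)] by (simp add: sum.reindex)
  also have "\<dots> = (\<Sum>i\<in>J. m i * h (e i))"
    using J(2) w_at by (intro sum.cong) auto
  finally show ?thesis .
qed

locale dyadic_level =
  fixes \<delta> a b :: real and M :: nat and D :: "int \<Rightarrow> 'a::metric_space set set"
    and c :: "int \<Rightarrow> 'a set \<Rightarrow> 'a" and j :: int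
  assumes dyadic: "dyadic_family \<delta> a b M D c"
begin

lemma scale_pos: "0 < \<delta> powi j"
  using dyadic by (simp add: dyadic_family_def)

lemma inner_radius_pos: "0 < a * \<delta> powi j"
  using dyadic by (simp add: dyadic_family_def)

lemma outer_radius_pos: "0 < b * \<delta> powi j"
  using dyadic by (simp add: dyadic_family_def)

lemma ball_subset_cell: "Q \<in> D j \<Longrightarrow> ball (c j Q) (a * \<delta> powi j) \<subseteq> Q"
  using dyadic by (simp add: dyadic_family_def)

lemma cell_subset_ball: "Q \<in> D j \<Longrightarrow> Q \<subseteq> ball (c j Q) (b * \<delta> powi j)"
  using dyadic by (simp add: dyadic_family_def)

lemma cell_borel: "Q \<in> D j \<Longrightarrow> Q \<in> sets borel"
  using dyadic by (simp add: dyadic_family_def)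

lemma centre_in_cell: "Q \<in> D j \<Longrightarrow> c j Q \<in> Q"
  using ball_subset_cell inner_radius_pos by (meson centre_in_ball subsetD)

lemma centres_separated:
  assumes "Q \<in> D j" "Q' \<in> D j" "Q \<noteq> Q'"
  shows "a * \<delta> powi j \<le> dist (c j Q) (c j Q')"
proof -
  have "Q \<inter> Q' = {}"
    using dyadic assms unfolding dyadic_family_def disjoint_def disjnt_def by blast
  then have "c j Q' \<notin> ball (c j Q) (a * \<delta> powi j)"
    using ball_subset_cell[OF assms(1)] centre_in_cell[OF assms(2)] by blast
  then show ?thesis
    by simp
qed

lemma inj_on_centre: "inj_on (c j) (D j)"
  using centres_separated inner_radius_pos by (force intro: inj_onI)

lemma finite_cells_centred_in:
  assumes "compact K"
  shows "finite {Q\<in>D j. c j Q \<in> K}"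
proof -
  have "disperse (a * \<delta> powi j) (c j ` D j)"
    using centres_separated by (auto simp: disperse_def)
  then have "finite (c j ` D j \<inter> K)"
    using finite_Int_compact_disperse[OF assms inner_radius_pos] by blast
  then have "finite (c j ` {Q\<in>D j. c j Q \<in> K})"
    by (rule finite_subset[rotated]) blast
  then show ?thesis
    using inj_on_centre by (rule finite_imageD[OF _ inj_on_subset]) auto
qed

lemma finite_cells_in_support:
  assumes "Cc \<phi>"
  shows "finite {Q\<in>D j. \<phi> (c j Q) \<noteq> 0}"
proof -
  have "finite {Q\<in>D j. c j Q \<in> closure {x. \<phi> x \<noteq> 0}}"
    using assms by (intro finite_cells_centred_in) (simp add: Cc_def)
  then show ?thesis
    by (rule finite_subset[rotated]) (auto intro: closure_subset[THEN subsetD])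
qed

end

locale dyadic_graph = dyadic_level \<delta> a b M D c j
  for \<delta> a b M and D :: "int \<Rightarrow> 'a::complete_space set set" and c j +
  fixes mu :: "'a measure" and H :: "'a set \<Rightarrow> 'a set \<Rightarrow> real" and C :: real
  assumes finite_dimension: "finite_metric_dimension (UNIV :: 'a set)"
    and sets_mu: "sets mu = sets borel"
    and balls_mu: "\<And>x r. 0 < r \<Longrightarrow> 0 < emeasure mu (ball x r) \<and> emeasure mu (ball x r) < \<infinity>"
    and C_pos: "0 < C"
    and H_pos: "\<And>Q Q'. Q \<in> D j \<Longrightarrow> Q' \<in> D j \<Longrightarrow> 0 < H Q Q'"
begin

abbreviation T where "T \<equiv> T_meas D c mu j"
abbreviation S where "S \<equiv> S_meas D c mu H C \<delta> j"
abbreviation w where "w \<equiv> dyad_weight c mu H C \<delta> j"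

definition neighbours :: "'a set \<Rightarrow> 'a set set" where
  "neighbours Q = {Q'\<in>D j. Q' \<noteq> Q \<and> dist (c j Q') (c j Q) < C * \<delta> powi j}"

definition kir :: "('a \<times> 'a \<Rightarrow> real) \<Rightarrow> 'a set \<Rightarrow> real" where
  "kir \<Phi> Q = 1 / measure mu Q *
     (\<Sum>Q'\<in>neighbours Q. \<Phi> (c j Q, c j Q') * (measure mu Q + measure mu Q') * H Q Q')"

lemma measure_cell_pos:
  assumes Q: "Q \<in> D j"
  shows "0 < measure mu Q"
proof -
  have "emeasure mu Q \<le> emeasure mu (ball (c j Q) (b * \<delta> powi j))"
    using cell_subset_ball[OF Q] sets_mu by (intro emeasure_mono) auto
  also have "\<dots> < \<infinity>"
    using balls_mu outer_radius_pos by blast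
  finally have finite: "emeasure mu Q \<noteq> top"
    by simp
  have "0 < emeasure mu (ball (c j Q) (a * \<delta> powi j))"
    using balls_mu inner_radius_pos by blast
  also have "\<dots> \<le> emeasure mu Q"
    using ball_subset_cell[OF Q] cell_borel[OF Q] sets_mu by (intro emeasure_mono) auto
  finally show ?thesis
    using emeasure_eq_ennreal_measure[OF finite] by simp
qed

lemma finite_neighbours: "finite (neighbours Q)"
proof -
  have "finite {Q'\<in>D j. c j Q' \<in> cball (c j Q) (C * \<delta> powi j)}"
    using finite_metric_dimension_compact_cball[OF finite_dimension] by (rule finite_cells_centred_in)
  then show ?thesis
    by (rule finite_subset[rotated]) (auto simp: neighbours_def dist_commute)
qed

lemma dyad_weight_neighbour: "Q' \<in> neighbours Q \<Longrightarrow> w Q Q' = H Q Q' * (measure mu Q + measure mu Q')"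
  by (auto simp: neighbours_def dyad_weight_def dist_commute)

lemma dyad_weight_eq_0: "Q' \<in> D j \<Longrightarrow> Q' \<notin> neighbours Q \<Longrightarrow> w Q Q' = 0"
  by (auto simp: neighbours_def dyad_weight_def dist_commute)

lemma dyad_weight_nonneg: "Q \<in> D j \<Longrightarrow> Q' \<in> D j \<Longrightarrow> 0 \<le> w Q Q'"
  using H_pos by (auto simp: dyad_weight_def less_imp_le)

lemma integral_T_meas:
  assumes "finite J" "J \<subseteq> D j" and "\<And>Q. Q \<in> D j - J \<Longrightarrow> \<phi> (c j Q) = 0"
  shows "(\<integral>x. \<phi> x * g x \<partial>T) = (\<Sum>Q\<in>J. measure mu Q * (\<phi> (c j Q) * g (c j Q)))"
  unfolding T_meas_def using assms
  by (intro integral_point_masses inj_on_centre) auto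

lemma S_meas_point_masses:
  "S = density (count_space UNIV)
     (\<lambda>z. \<Sum>i\<in>{i\<in>D j \<times> D j. map_prod (c j) (c j) i = z}. ennreal (case_prod w i))"
proof -
  have "{(Q, Q'). Q \<in> D j \<and> Q' \<in> D j \<and> c j Q = x \<and> c j Q' = y}
      = {i\<in>D j \<times> D j. map_prod (c j) (c j) i = (x, y)}" for x y
    by auto
  then show ?thesis
    unfolding S_meas_def by (simp add: case_prod_beta')
qed

lemma integral_S_meas:
  assumes J: "finite J" "J \<subseteq> D j" and outside_J: "\<And>Q. Q \<in> D j - J \<Longrightarrow> \<phi> (c j Q) = 0"
  shows "(\<integral>z. \<phi> (fst z) * \<Phi> z \<partial>S)
    = (\<Sum>Q\<in>J. \<phi> (c j Q) * (\<Sum>Q'\<in>neighbours Q. w Q Q' * \<Phi> (c j Q, c j Q')))"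
proof -
  have inj: "inj_on (map_prod (c j) (c j)) (D j \<times> D j)"
    using inj_on_centre inj_on_centre by (rule map_prod_inj_on)
  have finite_edges: "finite (SIGMA Q:J. neighbours Q)"
    using J(1) finite_neighbours by blast
  have edges: "(SIGMA Q:J. neighbours Q) \<subseteq> D j \<times> D j"
    using J(2) by (auto simp: neighbours_def)
  have outside_edges: "case_prod w i * (\<phi> (fst (map_prod (c j) (c j) i)) * \<Phi> (map_prod (c j) (c j) i)) = 0"
    if "i \<in> D j \<times> D j - (SIGMA Q:J. neighbours Q)" for i
  proof -
    obtain Q Q' where i: "i = (Q, Q')"
      by (cases i)
    with that have "Q \<in> D j" "Q' \<in> D j" "Q \<in> J \<longrightarrow> Q' \<notin> neighbours Q"
      by auto
    then have "\<phi> (c j Q) = 0 \<or> w Q Q' = 0"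
      using outside_J dyad_weight_eq_0 by blast
    with i show ?thesis
      by auto
  qed
  have "(\<integral>z. \<phi> (fst z) * \<Phi> z \<partial>S)
      = (\<Sum>(Q, Q')\<in>(SIGMA Q:J. neighbours Q). w Q Q' * (\<phi> (c j Q) * \<Phi> (c j Q, c j Q')))"
    unfolding S_meas_point_masses
    by (subst integral_point_masses[where h = "\<lambda>z. \<phi> (fst z) * \<Phi> z", OF inj _ finite_edges edges outside_edges])
      (auto simp: dyad_weight_nonneg intro!: sum.cong)
  also have "\<dots> = (\<Sum>Q\<in>J. \<phi> (c j Q) * (\<Sum>Q'\<in>neighbours Q. w Q Q' * \<Phi> (c j Q, c j Q')))"
    using J(1) finite_neighbours
    by (simp add: sum.Sigma[symmetric] sum_distrib_left mult.left_commute)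
  finally show ?thesis .
qed

lemma measure_mult_kir:
  assumes "Q \<in> D j"
  shows "measure mu Q * kir \<Phi> Q = (\<Sum>Q'\<in>neighbours Q. w Q Q' * \<Phi> (c j Q, c j Q'))"
  using measure_cell_pos[OF assms]
  by (auto simp: kir_def dyad_weight_neighbour mult_ac intro!: sum.cong)

lemma isolating_test_function:
  assumes "Q \<in> D j"
  obtains \<phi> where "Cc \<phi>" "\<phi> (c j Q) = 1" "\<And>Q'. Q' \<in> D j - {Q} \<Longrightarrow> \<phi> (c j Q') = 0"
proof
  let ?r = "a * \<delta> powi j"
  show "Cc (\<lambda>y. max 0 (1 - dist y (c j Q) / ?r))"
    using inner_radius_pos finite_metric_dimension_compact_cball[OF finite_dimension]
    by (rule Cc_tent_function)
  show "max 0 (1 - dist (c j Q) (c j Q) / ?r) = 1"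
    by simp
  show "max 0 (1 - dist (c j Q') (c j Q) / ?r) = 0" if "Q' \<in> D j - {Q}" for Q'
    using centres_separated[of Q' Q] that assms inner_radius_pos by (simp add: field_simps)
qed

lemma kir_identity_kir: "kir_identity T S \<Phi> (\<lambda>x. kir \<Phi> (inv_into (D j) (c j) x))"
  unfolding kir_identity_def
proof (intro allI impI)
  fix \<phi> :: "'a \<Rightarrow> real" assume "Cc \<phi>"
  define J where "J = {Q\<in>D j. \<phi> (c j Q) \<noteq> 0}"
  have J: "finite J" "J \<subseteq> D j" "\<And>Q. Q \<in> D j - J \<Longrightarrow> \<phi> (c j Q) = 0"
    using finite_cells_in_support[OF \<open>Cc \<phi>\<close>] by (auto simp: J_def)
  have "(\<integral>x. \<phi> x * kir \<Phi> (inv_into (D j) (c j) x) \<partial>T)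
      = (\<Sum>Q\<in>J. measure mu Q * (\<phi> (c j Q) * kir \<Phi> (inv_into (D j) (c j) (c j Q))))"
    by (rule integral_T_meas[of J \<phi>, OF J])
  also have "\<dots> = (\<Sum>Q\<in>J. \<phi> (c j Q) * (measure mu Q * kir \<Phi> Q))"
    using J(2) by (intro sum.cong) (auto simp: inv_into_f_f[OF inj_on_centre])
  also have "\<dots> = (\<integral>z. \<phi> (fst z) * \<Phi> z \<partial>S)"
    using integral_S_meas[of J \<phi>, OF J] J(2) by (auto simp: measure_mult_kir subset_iff intro!: sum.cong)
  finally show "(\<integral>x. \<phi> x * kir \<Phi> (inv_into (D j) (c j) x) \<partial>T) = (\<integral>z. \<phi> (fst z) * \<Phi> z \<partial>S)" .
qed

lemma kir_identity_imp_eq_kir: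
  assumes g: "kir_identity T S \<Phi> g" and Q: "Q \<in> D j"
  shows "g (c j Q) = kir \<Phi> Q"
proof -
  obtain \<phi> where \<phi>: "Cc \<phi>" "\<phi> (c j Q) = 1" "\<And>Q'. Q' \<in> D j - {Q} \<Longrightarrow> \<phi> (c j Q') = 0"
    using isolating_test_function[OF Q] by blast
  have J: "finite {Q}" "{Q} \<subseteq> D j" "\<And>Q'. Q' \<in> D j - {Q} \<Longrightarrow> \<phi> (c j Q') = 0"
    using Q \<phi>(3) by auto
  have "measure mu Q * g (c j Q) = (\<integral>x. \<phi> x * g x \<partial>T)"
    using integral_T_meas[of "{Q}" \<phi>, OF J] \<phi>(2) by simp
  also have "\<dots> = (\<integral>z. \<phi> (fst z) * \<Phi> z \<partial>S)"
    using g \<phi>(1) by (simp add: kir_identity_def)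
  also have "\<dots> = measure mu Q * kir \<Phi> Q"
    using integral_S_meas[of "{Q}" \<phi>, OF J] \<phi>(2) measure_mult_kir[OF Q] by simp
  finally show ?thesis
    using measure_cell_pos[OF Q] by simp
qed

lemma kir_eq_laplacian:
  assumes Q: "Q \<in> D j"
  shows "kir (\<lambda>(x, y). f y - f x) Q =
    (\<Sum>Q'\<in>{Q'\<in>D j. dist (c j Q') (c j Q) < C * \<delta> powi j}.
       (f (c j Q') - f (c j Q)) * (1 + measure mu Q' / measure mu Q) * H Q Q')"
proof -
  have "{Q'\<in>D j. dist (c j Q') (c j Q) < C * \<delta> powi j} = insert Q (neighbours Q)"
    using Q C_pos scale_pos by (auto simp: neighbours_def)
  moreover have "Q \<notin> neighbours Q"
    by (simp add: neighbours_def)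
  moreover have "(f (c j Q') - f (c j Q)) * (1 + measure mu Q' / measure mu Q) * H Q Q'
      = 1 / measure mu Q * ((f (c j Q') - f (c j Q)) * (measure mu Q + measure mu Q') * H Q Q')" for Q'
    using measure_cell_pos[OF Q] by (simp add: field_simps)
  ultimately show ?thesis
    using finite_neighbours by (simp add: kir_def sum_distrib_left)
qed

lemma kir_formula:
  "(\<exists>g. kir_identity T S \<Phi> g) \<and>
   (\<forall>g. kir_identity T S \<Phi> g \<longrightarrow>
      (\<forall>Q\<in>D j. g (c j Q) =
         (1 / measure mu Q) *
         (\<Sum>Q'\<in>{Q'\<in>D j. Q' \<noteq> Q \<and> dist (c j Q') (c j Q) < C * \<delta> powi j}.
            \<Phi> (c j Q, c j Q') * (measure mu Q + measure mu Q') * H Q Q')))"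
  unfolding neighbours_def[symmetric] kir_def[of \<Phi>, symmetric]
  using kir_identity_kir kir_identity_imp_eq_kir by blast

lemma laplacian_formula:
  "(\<exists>g. kir_identity T S (\<lambda>(x, y). f y - f x) g) \<and>
   (\<forall>g. kir_identity T S (\<lambda>(x, y). f y - f x) g \<longrightarrow>
      (\<forall>Q\<in>D j. g (c j Q) =
         (\<Sum>Q'\<in>{Q'\<in>D j. dist (c j Q') (c j Q) < C * \<delta> powi j}.
            (f (c j Q') - f (c j Q)) * (1 + measure mu Q' / measure mu Q) * H Q Q')))"
proof -
  have "g (c j Q) =
      (\<Sum>Q'\<in>{Q'\<in>D j. dist (c j Q') (c j Q) < C * \<delta> powi j}.
         (f (c j Q') - f (c j Q)) * (1 + measure mu Q' / measure mu Q) * H Q Q')"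
    if "kir_identity T S (\<lambda>(x, y). f y - f x) g" "Q \<in> D j" for g Q
    using kir_identity_imp_eq_kir[OF that] kir_eq_laplacian[OF that(2)] by (rule trans)
  then show ?thesis
    using kir_identity_kir by blast
qed

end

theorem proposition3p3:
  fixes mu :: "'a::complete_space measure"
    and D :: "int \<Rightarrow> 'a set set" and c :: "int \<Rightarrow> 'a set \<Rightarrow> 'a"
    and \<delta> a b :: real and M :: nat and j :: int and C :: real
    and H :: "'a set \<Rightarrow> 'a set \<Rightarrow> real"
  assumes "finite_metric_dimension (UNIV :: 'a set)"
    and "dyadic_family \<delta> a b M D c"
    and "sets mu = sets borel"
    and "\<forall>x r. 0 < r \<longrightarrow> 0 < emeasure mu (ball x r) \<and> emeasure mu (ball x r) < \<infinity>"
    and "0 < C"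
    and "\<forall>Q\<in>D j. \<forall>Q'\<in>D j. H Q Q' = H Q' Q \<and> 0 < H Q Q'"
  shows
    "(\<forall>\<Phi> :: 'a \<times> 'a \<Rightarrow> real. Cc \<Phi> \<longrightarrow>
       (\<exists>g. kir_identity (T_meas D c mu j) (S_meas D c mu H C \<delta> j) \<Phi> g) \<and>
       (\<forall>g. kir_identity (T_meas D c mu j) (S_meas D c mu H C \<delta> j) \<Phi> g \<longrightarrow>
          (\<forall>Q\<in>D j. g (c j Q) =
             (1 / measure mu Q) *
             (\<Sum>Q'\<in>{Q'\<in>D j. Q' \<noteq> Q \<and> dist (c j Q') (c j Q) < C * \<delta> powi j}.
                \<Phi> (c j Q, c j Q') * (measure mu Q + measure mu Q') * H Q Q')))) \<and>
     (\<forall>f :: 'a \<Rightarrow> real. continuous_on UNIV f \<and> bounded (range f) \<longrightarrow>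
       (\<exists>g. kir_identity (T_meas D c mu j) (S_meas D c mu H C \<delta> j) (\<lambda>(x, y). f y - f x) g) \<and>
       (\<forall>g. kir_identity (T_meas D c mu j) (S_meas D c mu H C \<delta> j) (\<lambda>(x, y). f y - f x) g \<longrightarrow>
          (\<forall>Q\<in>D j. g (c j Q) =
             (\<Sum>Q'\<in>{Q'\<in>D j. dist (c j Q') (c j Q) < C * \<delta> powi j}.
                (f (c j Q') - f (c j Q)) * (1 + measure mu Q' / measure mu Q) * H Q Q'))))"
proof -
  interpret dyadic_graph \<delta> a b M D c j mu H C
    using assms by unfold_locales auto
  show ?thesis
    using kir_formula laplacian_formula by blast
qed

end
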